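(* Let $G$ be a subgroup of the affine group $\mathcal G$ with a unitary representation $G\ni g\mapsto U_g$ on a separable Hilbert space $\mathcal H$, and let $\dot A$ be a closed densely defined symmetric operator in $\mathcal H$ which is $G$-invariant with respect to this representation. Suppose that $A$ is a maximal dissipative extension of $\dot A$. Then for every $g\in G$ the restriction $A_g=(\dot A)^*|_{D_g}$ of the adjoint operator $(\dot A)^*$ to $D_g=U_g(\mathrm{Dom}(A))$ is a maximal dissipative extension of $\dot A$.
   Context: $\mathcal G$ denotes the group (under composition) of affine maps $g(x)=ax+b$ of $\mathbb R$ with $a>0$, $b\in\mathbb R$. For an operator $A$ and $g(x)=ax+b$, $g(A)$ denotes $aA+bI$. A densely defined closed operator $A$ is called $G$-invariant (with respect to a unitary representation $g\mapsto U_g$ of a subgroup $G\subset\mathcal G$) if for all $g\in G$ one has $U_g(\mathrm{Dom}(A))=\mathrm{Dom}(A)$ and $U_gAU_g^*f=aAf+bf$ for all $f\in\mathrm{Dom}(A)$, where $g(x)=ax+b$. An operator is dissipative if $\operatorname{Im}(Af,f)\ge0$ on its domain, and maximal dissipative if it has no proper dissipative extension. *)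

theory Defs
  imports "HOL-Analysis.Analysis"
begin

class complex_hilbert = banach +
  fixes scaleC :: "complex \<Rightarrow> 'a \<Rightarrow> 'a"
    and cinner :: "'a \<Rightarrow> 'a \<Rightarrow> complex"
  assumes scaleC_add_right: "scaleC c (x + y) = scaleC c x + scaleC c y"
    and scaleC_add_left: "scaleC (c + d) x = scaleC c x + scaleC d x"
    and scaleC_scaleC: "scaleC c (scaleC d x) = scaleC (c * d) x"
    and scaleC_one: "scaleC 1 x = x"
    and scaleR_scaleC: "scaleR r x = scaleC (complex_of_real r) x"
    and cinner_add_left: "cinner (x + y) z = cinner x z + cinner y z"
    and cinner_scaleC_left: "cinner (scaleC c x) y = c * cinner x y"
    and cinner_commute: "cinner y x = cnj (cinner x y)"
    and cinner_self: "cinner x x = complex_of_real ((norm x)\<^sup>2)"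

definition csubspace :: "'a::complex_hilbert set \<Rightarrow> bool" where
  "csubspace D \<longleftrightarrow> 0 \<in> D \<and> (\<forall>x\<in>D. \<forall>y\<in>D. x + y \<in> D) \<and> (\<forall>c. \<forall>x\<in>D. scaleC c x \<in> D)"

definition lin_op :: "'a::complex_hilbert set \<Rightarrow> ('a \<Rightarrow> 'a) \<Rightarrow> bool" where
  "lin_op D A \<longleftrightarrow> csubspace D \<and> (\<forall>x\<in>D. \<forall>y\<in>D. A (x + y) = A x + A y)
     \<and> (\<forall>c. \<forall>x\<in>D. A (scaleC c x) = scaleC c (A x))"

definition densely_defined :: "'a::complex_hilbert set \<Rightarrow> bool" where
  "densely_defined D \<longleftrightarrow> closure D = UNIV"

definition closed_op :: "'a::complex_hilbert set \<Rightarrow> ('a \<Rightarrow> 'a) \<Rightarrow> bool" where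
  "closed_op D A \<longleftrightarrow> closed ((\<lambda>x. (x, A x)) ` D)"

definition symmetric_op :: "'a::complex_hilbert set \<Rightarrow> ('a \<Rightarrow> 'a) \<Rightarrow> bool" where
  "symmetric_op D A \<longleftrightarrow> (\<forall>f\<in>D. \<forall>g\<in>D. cinner (A f) g = cinner f (A g))"

definition adj_dom :: "'a::complex_hilbert set \<Rightarrow> ('a \<Rightarrow> 'a) \<Rightarrow> 'a set" where
  "adj_dom D A = {g. \<exists>h. \<forall>f\<in>D. cinner (A f) g = cinner f h}"

definition adj_fun :: "'a::complex_hilbert set \<Rightarrow> ('a \<Rightarrow> 'a) \<Rightarrow> 'a \<Rightarrow> 'a" where
  "adj_fun D A g = (THE h. \<forall>f\<in>D. cinner (A f) g = cinner f h)"

definition op_extends :: "'a::complex_hilbert set \<Rightarrow> ('a \<Rightarrow> 'a) \<Rightarrow> 'a set \<Rightarrow> ('a \<Rightarrow> 'a) \<Rightarrow> bool" where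
  "op_extends D A D0 A0 \<longleftrightarrow> D0 \<subseteq> D \<and> (\<forall>f\<in>D0. A f = A0 f)"

definition dissipative :: "'a::complex_hilbert set \<Rightarrow> ('a \<Rightarrow> 'a) \<Rightarrow> bool" where
  "dissipative D A \<longleftrightarrow> (\<forall>f\<in>D. Im (cinner (A f) f) \<ge> 0)"

definition maximal_dissipative :: "'a::complex_hilbert set \<Rightarrow> ('a \<Rightarrow> 'a) \<Rightarrow> bool" where
  "maximal_dissipative D A \<longleftrightarrow> lin_op D A \<and> dissipative D A \<and>
     (\<forall>D' A'. lin_op D' A' \<and> dissipative D' A' \<and> op_extends D' A' D A \<longrightarrow> D' = D)"

definition separable_space :: "'a::complex_hilbert itself \<Rightarrow> bool" where
  "separable_space _ \<longleftrightarrow> (\<exists>C::'a set. countable C \<and> closure C = UNIV)"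

definition unitary_op :: "('a::complex_hilbert \<Rightarrow> 'a) \<Rightarrow> bool" where
  "unitary_op U \<longleftrightarrow> bij U \<and> (\<forall>x y. U (x + y) = U x + U y) \<and> (\<forall>c x. U (scaleC c x) = scaleC c (U x))
     \<and> (\<forall>x y. cinner (U x) (U y) = cinner x y)"

text \<open>An affine map g(x) = a x + b with a > 0 is represented by the pair (a, b).\<close>

definition aff_comp :: "real \<times> real \<Rightarrow> real \<times> real \<Rightarrow> real \<times> real" where
  "aff_comp g h = (fst g * fst h, fst g * snd h + snd g)"

definition aff_inv :: "real \<times> real \<Rightarrow> real \<times> real" where
  "aff_inv g = (1 / fst g, - snd g / fst g)"

definition affine_subgroup :: "(real \<times> real) set \<Rightarrow> bool" where
  "affine_subgroup G \<longleftrightarrow> G \<subseteq> {g. fst g > 0} \<and> (1, 0) \<in> G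
     \<and> (\<forall>g\<in>G. \<forall>h\<in>G. aff_comp g h \<in> G) \<and> (\<forall>g\<in>G. aff_inv g \<in> G)"

definition unitary_rep :: "(real \<times> real) set \<Rightarrow> (real \<times> real \<Rightarrow> 'a::complex_hilbert \<Rightarrow> 'a) \<Rightarrow> bool" where
  "unitary_rep G U \<longleftrightarrow> (\<forall>g\<in>G. unitary_op (U g)) \<and> U (1, 0) = id
     \<and> (\<forall>g\<in>G. \<forall>h\<in>G. U (aff_comp g h) = U g \<circ> U h)
     \<and> (\<forall>f. continuous_on G (\<lambda>g. U g f))"

definition G_invariant :: "(real \<times> real) set \<Rightarrow> (real \<times> real \<Rightarrow> 'a::complex_hilbert \<Rightarrow> 'a)
     \<Rightarrow> 'a set \<Rightarrow> ('a \<Rightarrow> 'a) \<Rightarrow> bool" where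
  "G_invariant G U D A \<longleftrightarrow> (\<forall>g\<in>G. U g ` D = D \<and>
     (\<forall>f\<in>D. U g (A (inv (U g) f)) = scaleC (complex_of_real (fst g)) (A f) + scaleC (complex_of_real (snd g)) f))"

end

theory Submission
  imports Defs
begin

text \<open>A dissipative extension \<open>A\<close> of a symmetric operator \<open>A\<^sub>0\<close> is automatically a restriction of
  \<open>A\<^sub>0\<^sup>*\<close>: testing dissipativity on \<open>f + c h\<close> with \<open>h \<in> Dom A\<^sub>0\<close> and arbitrary \<open>c\<close> forces
  \<open>\<langle>A\<^sub>0 h, f\<rangle> = \<langle>h, A f\<rangle>\<close>. Covariance \<open>U A\<^sub>0 U\<^sup>* = a A\<^sub>0 + b\<close> passes to the adjoint, so on \<open>U ` Dom A\<close>
  the operator \<open>A\<^sub>0\<^sup>*\<close> coincides with \<open>U g\<^sup>-\<^sup>1(A) U\<^sup>*\<close>. Conjugating by a unitary and applying an affine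
  map with positive slope is an invertible operation that preserves linearity, dissipativity and
  extensions, hence maximal dissipativity.\<close>

lemma cinner_add_right: "cinner (x::'a::complex_hilbert) (y + z) = cinner x y + cinner x z"
  by (metis cinner_commute cinner_add_left complex_cnj_add)

lemma cinner_scaleC_right: "cinner (x::'a::complex_hilbert) (scaleC c y) = cnj c * cinner x y"
  by (metis cinner_commute cinner_scaleC_left complex_cnj_mult)

lemma cinner_scaleR_left: "cinner (scaleR r (x::'a::complex_hilbert)) y = of_real r * cinner x y"
  by (simp add: scaleR_scaleC cinner_scaleC_left)

lemma cinner_scaleR_right: "cinner (x::'a::complex_hilbert) (scaleR r y) = of_real r * cinner x y"
  by (simp add: scaleR_scaleC cinner_scaleC_right)

lemma cinner_diff_left: "cinner ((x::'a::complex_hilbert) - y) z = cinner x z - cinner y z"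
  using cinner_add_left[of "x - y" y z] by simp

lemma cinner_diff_right: "cinner (z::'a::complex_hilbert) (x - y) = cinner z x - cinner z y"
  using cinner_add_right[of z "x - y" y] by simp

lemma Re_cinner_polarization:
  "Re (cinner (x::'a::complex_hilbert) y) = ((norm (x + y))\<^sup>2 - (norm x)\<^sup>2 - (norm y)\<^sup>2) / 2"
proof -
  have "cinner (x + y) (x + y) = cinner x x + cinner x y + cnj (cinner x y) + cinner y y"
    by (simp add: cinner_add_left cinner_add_right cinner_commute[of y x])
  from arg_cong[where f = Re, OF this] show ?thesis by (simp add: cinner_self)
qed

lemma dense_orthogonal_eq_0:
  assumes "densely_defined (D::'a::complex_hilbert set)" and "\<forall>k\<in>D. cinner k y = 0"
  shows "y = 0"
proof -
  let ?S = "{k. ((norm (k + y))\<^sup>2 - (norm k)\<^sup>2 - (norm y)\<^sup>2) / 2 = 0}"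
  have "closed ?S" by (intro closed_Collect_eq continuous_intros) auto
  moreover have "D \<subseteq> ?S"
  proof
    fix k assume "k \<in> D"
    then have "Re (cinner k y) = 0" using assms(2) by simp
    then show "k \<in> ?S" using Re_cinner_polarization[of k y] by simp
  qed
  ultimately have "closure D \<subseteq> ?S" by (rule closure_minimal[rotated])
  moreover have "y \<in> closure D" using assms(1) unfolding densely_defined_def by simp
  ultimately have "y \<in> ?S" by (rule subsetD)
  then have "Re (cinner y y) = 0" using Re_cinner_polarization[of y y] by simp
  then show ?thesis by (simp add: cinner_self)
qed

lemma adj_fun_eqI:
  assumes "densely_defined D" and "\<forall>k\<in>D. cinner (A k) f = cinner k h"
  shows "f \<in> adj_dom D A \<and> adj_fun D A f = h"
proof
  show "f \<in> adj_dom D A" using assms(2) unfolding adj_dom_def by auto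
  show "adj_fun D A f = h" unfolding adj_fun_def
  proof (rule the_equality)
    fix h' assume "\<forall>k\<in>D. cinner (A k) f = cinner k h'"
    then have "\<forall>k\<in>D. cinner k (h' - h) = 0" using assms(2) by (simp add: cinner_diff_right)
    then have "h' - h = 0" by (rule dense_orthogonal_eq_0[OF assms(1)])
    then show "h' = h" by simp
  qed (use assms(2) in simp)
qed

lemma adj_fun_cinner:
  assumes "densely_defined D" and "f \<in> adj_dom D A" and "k \<in> D"
  shows "cinner (A k) f = cinner k (adj_fun D A f)"
proof -
  obtain h where h: "\<forall>k\<in>D. cinner (A k) f = cinner k h"
    using assms(2) unfolding adj_dom_def by auto
  then have "adj_fun D A f = h" using adj_fun_eqI[OF assms(1)] by blast
  with h assms(3) show ?thesis by simp
qed

lemma nonneg_affine_imp_slope_zero: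
  assumes "\<forall>t::real. 0 \<le> p + t * q"
  shows "q = 0"
proof (rule ccontr)
  assume "q \<noteq> 0"
  then have "p + (- (\<bar>p\<bar> + 1) / q) * q = p - (\<bar>p\<bar> + 1)" by simp
  moreover have "0 \<le> p + (- (\<bar>p\<bar> + 1) / q) * q" using assms by blast
  ultimately show False by linarith
qed

lemma dissipative_extension_cinner_eq:
  fixes D D0 :: "'a::complex_hilbert set"
  assumes "lin_op D A" and "dissipative D A" and "op_extends D A D0 A0" and "symmetric_op D0 A0"
    and f: "f \<in> D" and h: "h \<in> D0"
  shows "cinner (A0 h) f = cinner h (A f)"
proof -
  define \<alpha> where "\<alpha> = cinner (A f) h"
  define \<beta> where "\<beta> = cinner (A0 h) f"
  define r where "r = cinner (A0 h) h"
  have hD: "h \<in> D" and Ah: "A h = A0 h" using assms(3) h unfolding op_extends_def by auto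
  have "r = cnj r"
    using assms(4) h cinner_commute[of "A0 h" h] unfolding symmetric_op_def r_def by simp
  then have r_real: "Im r = 0" by (simp add: complex_eq_iff)
  have nonneg: "0 \<le> Im (cinner (A f) f) + Im (cnj c * \<alpha> + c * \<beta>)" for c
  proof -
    have "f + scaleC c h \<in> D" and "A (f + scaleC c h) = A f + scaleC c (A0 h)"
      using assms(1) f hD Ah unfolding lin_op_def csubspace_def by auto
    then have "0 \<le> Im (cinner (A f + scaleC c (A0 h)) (f + scaleC c h))"
      using assms(2) unfolding dissipative_def by metis
    moreover have "cinner (A f + scaleC c (A0 h)) (f + scaleC c h)
        = cinner (A f) f + (cnj c * \<alpha> + c * \<beta>) + c * cnj c * r"
      by (simp add: cinner_add_left cinner_add_right cinner_scaleC_left cinner_scaleC_right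
          \<alpha>_def \<beta>_def r_def algebra_simps)
    moreover have "Im (c * cnj c * r) = 0" using r_real by (simp add: complex_mult_cnj)
    ultimately show ?thesis by (simp only: plus_complex.sel)
  qed
  text \<open>For \<open>c = t\<close> and \<open>c = i t\<close> with \<open>t\<close> real these are affine functions of \<open>t\<close> bounded below.\<close>
  have "\<forall>t::real. 0 \<le> Im (cinner (A f) f) + t * Im (\<alpha> + \<beta>)"
    using nonneg[of "of_real _"] by (simp add: algebra_simps)
  then have "Im (\<alpha> + \<beta>) = 0" by (rule nonneg_affine_imp_slope_zero)
  moreover have "\<forall>t::real. 0 \<le> Im (cinner (A f) f) + t * Re (\<beta> - \<alpha>)"
    using nonneg[of "\<i> * of_real _"] by (simp add: algebra_simps)
  then have "Re (\<beta> - \<alpha>) = 0" by (rule nonneg_affine_imp_slope_zero)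
  ultimately have "\<beta> = cnj \<alpha>" by (simp add: complex_eq_iff)
  then show ?thesis unfolding \<alpha>_def \<beta>_def by (simp add: cinner_commute[of h])
qed

lemma dissipative_extension_restricts_adjoint:
  assumes "densely_defined D0" and "lin_op D A" and "dissipative D A"
    and "op_extends D A D0 A0" and "symmetric_op D0 A0" and "f \<in> D"
  shows "f \<in> adj_dom D0 A0 \<and> adj_fun D0 A0 f = A f"
  using adj_fun_eqI[OF assms(1)] dissipative_extension_cinner_eq[OF assms(2-6)] by blast

lemma unitary_op_add: "unitary_op V \<Longrightarrow> V (x + y) = V x + V y"
  and unitary_op_scaleC: "unitary_op V \<Longrightarrow> V (scaleC c x) = scaleC c (V x)"
  and unitary_op_cinner: "unitary_op V \<Longrightarrow> cinner (V x) (V y) = cinner x y"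
  and unitary_op_bij: "unitary_op V \<Longrightarrow> bij V"
  by (simp_all add: unitary_op_def)

lemma unitary_op_scaleR: "unitary_op (V::'a::complex_hilbert \<Rightarrow> 'a) \<Longrightarrow> V (scaleR r x) = scaleR r (V x)"
  by (simp add: scaleR_scaleC unitary_op_scaleC)

lemma unitary_op_inv_f_f: "unitary_op V \<Longrightarrow> inv V (V x) = x"
  and unitary_op_f_inv_f: "unitary_op V \<Longrightarrow> V (inv V x) = x"
  by (simp_all add: unitary_op_bij bij_is_inj bij_is_surj surj_f_inv_f)

lemma unitary_op_inv:
  assumes "unitary_op V"
  shows "unitary_op (inv V)"
  unfolding unitary_op_def
proof (intro conjI allI)
  show "bij (inv V)" using assms by (simp add: unitary_op_bij bij_imp_bij_inv)
  fix x y c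
  have "x + y = V (inv V x + inv V y)"
    by (simp add: assms unitary_op_add unitary_op_f_inv_f)
  then show "inv V (x + y) = inv V x + inv V y" by (simp add: assms unitary_op_inv_f_f)
  have "scaleC c x = V (scaleC c (inv V x))"
    by (simp add: assms unitary_op_scaleC unitary_op_f_inv_f)
  then show "inv V (scaleC c x) = scaleC c (inv V x)" by (simp add: assms unitary_op_inv_f_f)
  have "cinner (inv V x) (inv V y) = cinner (V (inv V x)) (V (inv V y))"
    by (simp add: assms unitary_op_cinner)
  then show "cinner (inv V x) (inv V y) = cinner x y" by (simp add: assms unitary_op_f_inv_f)
qed

lemma adjoint_covariant:
  fixes V :: "'a::complex_hilbert \<Rightarrow> 'a"
  assumes "densely_defined D0" and V: "unitary_op V" and "V ` D0 = D0" and "a \<noteq> 0"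
    and cov: "\<forall>k\<in>D0. V (A0 (inv V k)) = scaleR a (A0 k) + scaleR b k"
    and f: "f \<in> adj_dom D0 A0"
  shows "V f \<in> adj_dom D0 A0
    \<and> adj_fun D0 A0 (V f) = scaleR (1 / a) (V (adj_fun D0 A0 f) - scaleR b (V f))"
proof (rule adj_fun_eqI[OF assms(1)], intro ballI)
  fix h assume "h \<in> D0"
  then obtain k where k: "k \<in> D0" and h: "h = V k" using assms(3) by auto
  have "V k \<in> D0" using assms(3) k by blast
  then have "V (A0 (inv V (V k))) = scaleR a (A0 (V k)) + scaleR b (V k)" using cov by blast
  then have "A0 (V k) = scaleR (1 / a) (V (A0 k) - scaleR b (V k))"
    using \<open>a \<noteq> 0\<close> by (simp add: unitary_op_inv_f_f[OF V])
  then have "cinner (A0 h) (V f) = of_real (1 / a) * (cinner (A0 k) f - of_real b * cinner k f)"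
    by (simp add: h cinner_scaleR_left cinner_diff_left unitary_op_cinner[OF V])
  also have "\<dots> = of_real (1 / a) * (cinner k (adj_fun D0 A0 f) - of_real b * cinner k f)"
    by (simp add: adj_fun_cinner[OF assms(1) f k])
  also have "\<dots> = cinner h (scaleR (1 / a) (V (adj_fun D0 A0 f) - scaleR b (V f)))"
    by (simp add: h cinner_scaleR_right cinner_diff_right unitary_op_cinner[OF V])
  finally show "cinner (A0 h) (V f) = cinner h (scaleR (1 / a) (V (adj_fun D0 A0 f) - scaleR b (V f)))" .
qed

definition conj_affine :: "('a::complex_hilbert \<Rightarrow> 'a) \<Rightarrow> real \<Rightarrow> real \<Rightarrow> ('a \<Rightarrow> 'a) \<Rightarrow> 'a \<Rightarrow> 'a" where
  "conj_affine V a b A x = scaleR a (V (A (inv V x))) + scaleR b x"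

lemma conj_affine_apply:
  "unitary_op V \<Longrightarrow> conj_affine V a b A (V y) = scaleR a (V (A y)) + scaleR b (V y)"
  by (simp add: conj_affine_def unitary_op_inv_f_f)

lemma lin_op_conj_affine:
  assumes V: "unitary_op V" and "lin_op D A"
  shows "lin_op (V ` D) (conj_affine V a b A)"
proof -
  have D: "0 \<in> D" "\<And>x y. x \<in> D \<Longrightarrow> y \<in> D \<Longrightarrow> x + y \<in> D" "\<And>x. x \<in> D \<Longrightarrow> scaleC c x \<in> D"
    and A: "\<And>x y. x \<in> D \<Longrightarrow> y \<in> D \<Longrightarrow> A (x + y) = A x + A y"
      "\<And>x. x \<in> D \<Longrightarrow> A (scaleC c x) = scaleC c (A x)" for c
    using assms(2) unfolding lin_op_def csubspace_def by auto
  show ?thesis unfolding lin_op_def csubspace_def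
  proof (intro conjI ballI allI)
    show "0 \<in> V ` D" using D(1) unitary_op_scaleR[OF V, of 0 0] by force
  next
    fix x y assume "x \<in> V ` D" "y \<in> V ` D"
    then obtain x' y' where x': "x' \<in> D" "x = V x'" and y': "y' \<in> D" "y = V y'" by auto
    have sum: "x + y = V (x' + y')" using x' y' unitary_op_add[OF V] by simp
    then show "x + y \<in> V ` D" using D(2)[OF x'(1) y'(1)] by blast
    have "conj_affine V a b A (x + y) = scaleR a (V (A (x' + y'))) + scaleR b (V (x' + y'))"
      unfolding sum by (rule conj_affine_apply[OF V])
    also have "\<dots> = conj_affine V a b A x + conj_affine V a b A y"
      using x' y' A(1) by (simp add: conj_affine_apply[OF V] unitary_op_add[OF V] algebra_simps)
    finally show "conj_affine V a b A (x + y) = conj_affine V a b A x + conj_affine V a b A y" .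
  next
    fix c x assume "x \<in> V ` D"
    then obtain x' where x': "x' \<in> D" "x = V x'" by auto
    have scaled: "scaleC c x = V (scaleC c x')" using x' unitary_op_scaleC[OF V] by simp
    then show "scaleC c x \<in> V ` D" using D(3)[OF x'(1)] by blast
    have "conj_affine V a b A (scaleC c x) = scaleR a (V (A (scaleC c x'))) + scaleR b (V (scaleC c x'))"
      unfolding scaled by (rule conj_affine_apply[OF V])
    then show "conj_affine V a b A (scaleC c x) = scaleC c (conj_affine V a b A x)"
      using x' A(2) by (simp add: conj_affine_apply[OF V] unitary_op_scaleC[OF V] scaleC_add_right scaleR_scaleC scaleC_scaleC mult.commute)
  qed
qed

lemma dissipative_conj_affine:
  assumes V: "unitary_op V" and "0 \<le> a" and "dissipative D A"
  shows "dissipative (V ` D) (conj_affine V a b A)"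
  unfolding dissipative_def
proof
  fix x assume "x \<in> V ` D"
  then obtain y where y: "y \<in> D" and x: "x = V y" by auto
  have "Im (cinner (conj_affine V a b A x) x) = a * Im (cinner (A y) y)"
    by (simp add: x conj_affine_apply[OF V] cinner_add_left cinner_scaleR_left
        unitary_op_cinner[OF V] cinner_self)
  moreover have "0 \<le> Im (cinner (A y) y)" using assms(3) y unfolding dissipative_def by blast
  ultimately show "0 \<le> Im (cinner (conj_affine V a b A x) x)" using assms(2) by simp
qed

lemma op_extends_conj_affine:
  assumes "unitary_op V" and "op_extends D' A' D A"
  shows "op_extends (V ` D') (conj_affine V a b A') (V ` D) (conj_affine V a b A)"
  using assms unfolding op_extends_def by (auto simp: conj_affine_apply)

lemma conj_affine_inverse:
  assumes V: "unitary_op V" and "a \<noteq> 0"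
  shows "conj_affine (inv V) (1 / a) (- b / a) (conj_affine V a b A) = A"
proof
  fix x
  have "inv (inv V) = V" using V by (simp add: unitary_op_bij inv_inv_eq)
  moreover have "inv V (scaleR a (V (A x)) + scaleR b (V x)) = scaleR a (A x) + scaleR b x"
    using unitary_op_inv[OF V]
    by (simp add: unitary_op_add unitary_op_scaleR unitary_op_inv_f_f[OF V])
  ultimately show "conj_affine (inv V) (1 / a) (- b / a) (conj_affine V a b A) x = A x"
    using \<open>a \<noteq> 0\<close> by (simp add: conj_affine_def unitary_op_inv_f_f[OF V] algebra_simps)
qed

lemma maximal_dissipative_conj_affine:
  assumes V: "unitary_op V" and "0 < a" and max: "maximal_dissipative D A"
  shows "maximal_dissipative (V ` D) (conj_affine V a b A)"
  unfolding maximal_dissipative_def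
proof (intro conjI allI impI)
  show "lin_op (V ` D) (conj_affine V a b A)" and "dissipative (V ` D) (conj_affine V a b A)"
    using max lin_op_conj_affine[OF V] dissipative_conj_affine[OF V] \<open>0 < a\<close>
    unfolding maximal_dissipative_def by auto
  fix D' A'
  assume "lin_op D' A' \<and> dissipative D' A' \<and> op_extends D' A' (V ` D) (conj_affine V a b A)"
  then have "lin_op D' A'" "dissipative D' A'" "op_extends D' A' (V ` D) (conj_affine V a b A)"
    by auto
  text \<open>Transporting the extension back by the inverse operation gives an extension of \<open>A\<close>.\<close>
  note W = unitary_op_inv[OF V]
  let ?A'' = "conj_affine (inv V) (1 / a) (- b / a) A'"
  have "inv V ` V ` D = D" using V by (simp add: image_comp unitary_op_inv_f_f)
  moreover have "a \<noteq> 0" using \<open>0 < a\<close> by simp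
  ultimately have "op_extends (inv V ` D') ?A'' D A"
    using op_extends_conj_affine[OF W \<open>op_extends D' A' _ _\<close>, of "1 / a" "- b / a"]
    by (simp only: conj_affine_inverse[OF V \<open>a \<noteq> 0\<close>])
  moreover have "lin_op (inv V ` D') ?A''" "dissipative (inv V ` D') ?A''"
    using lin_op_conj_affine[OF W \<open>lin_op D' A'\<close>] dissipative_conj_affine[OF W _ \<open>dissipative D' A'\<close>]
      \<open>0 < a\<close> by auto
  ultimately have "inv V ` D' = D" using max unfolding maximal_dissipative_def by blast
  then have "V ` D = V ` inv V ` D'" by simp
  also have "\<dots> = D'" using V by (simp add: image_comp unitary_op_f_inv_f)
  finally show "D' = V ` D" by simp
qed

lemma maximal_dissipative_cong:
  assumes "maximal_dissipative D A" and "\<forall>x\<in>D. B x = A x"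
  shows "maximal_dissipative D B"
proof -
  have "csubspace D" using assms(1) unfolding maximal_dissipative_def lin_op_def by blast
  then have "lin_op D B = lin_op D A" and "dissipative D B = dissipative D A"
    and "\<And>D' A'. op_extends D' A' D B = op_extends D' A' D A"
    using assms(2) unfolding lin_op_def csubspace_def dissipative_def op_extends_def by auto
  with assms(1) show ?thesis unfolding maximal_dissipative_def by simp
qed

theorem lemma3p1:
  fixes G :: "(real \<times> real) set"
    and U :: "real \<times> real \<Rightarrow> 'h::complex_hilbert \<Rightarrow> 'h"
    and D0 :: "'h set" and A0 :: "'h \<Rightarrow> 'h"
    and D :: "'h set" and A :: "'h \<Rightarrow> 'h"
  assumes "separable_space TYPE('h)"
    and "affine_subgroup G"
    and "unitary_rep G U"
    and "lin_op D0 A0" and "densely_defined D0" and "closed_op D0 A0" and "symmetric_op D0 A0"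
    and "G_invariant G U D0 A0"
    and "maximal_dissipative D A" and "op_extends D A D0 A0"
  shows "\<forall>g\<in>G. U g ` D \<subseteq> adj_dom D0 A0
           \<and> maximal_dissipative (U g ` D) (adj_fun D0 A0)
           \<and> op_extends (U g ` D) (adj_fun D0 A0) D0 A0"
proof
  fix g assume "g \<in> G"
  obtain a b where g: "g = (a, b)" by fastforce
  have "0 < a" using assms(2) \<open>g \<in> G\<close> g unfolding affine_subgroup_def by auto
  have V: "unitary_op (U g)" using assms(3) \<open>g \<in> G\<close> unfolding unitary_rep_def by blast
  have D0: "U g ` D0 = D0" and cov: "\<forall>k\<in>D0. U g (A0 (inv (U g) k)) = scaleR a (A0 k) + scaleR b k"
    using assms(8) \<open>g \<in> G\<close> g unfolding G_invariant_def by (auto simp: scaleR_scaleC)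
  have A_adj: "f \<in> adj_dom D0 A0 \<and> adj_fun D0 A0 f = A f" if "f \<in> D" for f
    using dissipative_extension_restricts_adjoint[OF assms(5) _ _ assms(10,7) that] assms(9)
    unfolding maximal_dissipative_def by blast
  have Ag: "x \<in> adj_dom D0 A0 \<and> adj_fun D0 A0 x = conj_affine (U g) (1 / a) (- b / a) A x"
    if x: "x \<in> U g ` D" for x
  proof -
    obtain f where "f \<in> D" and "x = U g f" using x by blast
    with adjoint_covariant[OF assms(5) V D0 _ cov] A_adj \<open>0 < a\<close> show ?thesis
      by (simp add: conj_affine_apply[OF V] algebra_simps diff_divide_distrib)
  qed
  show "U g ` D \<subseteq> adj_dom D0 A0
      \<and> maximal_dissipative (U g ` D) (adj_fun D0 A0)
      \<and> op_extends (U g ` D) (adj_fun D0 A0) D0 A0"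
  proof (intro conjI)
    show "U g ` D \<subseteq> adj_dom D0 A0" using Ag by blast
    show "maximal_dissipative (U g ` D) (adj_fun D0 A0)"
    proof (rule maximal_dissipative_cong)
      show "maximal_dissipative (U g ` D) (conj_affine (U g) (1 / a) (- b / a) A)"
        using maximal_dissipative_conj_affine[OF V _ assms(9)] \<open>0 < a\<close> by simp
    qed (use Ag in blast)
    show "op_extends (U g ` D) (adj_fun D0 A0) D0 A0"
      using assms(10) image_mono[of D0 D "U g"] D0 A_adj unfolding op_extends_def by auto
  qed
qed

end
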